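(* Let $\mathcal F$ be a semiholomorphic foliation on an open set $U\subset\mathbb C^2$ with holomorphic coordinates $(x,y)$, transverse to the fibration $\{x=\text{const}\}$ and defined by $dy-\lambda\,dx$ with $\lambda\in C^\infty(U,\mathbb C)$. Put $b=\partial\lambda/\partial\bar y$. Let $L$ be a (connected) leaf of $\mathcal F$ in $U$, written as a graph $y=\varphi(x)$, $x\in D$, and consider $b_L(x)=b(x,\varphi(x))$ as a function of $x\in D$. Then the zero set of $b_L$ is either discrete in $D$ or all of $D$. Moreover, if $x_0$ is an isolated zero of $b_L$, then $\frac{\partial b_L}{\partial\bar x}(x_0)=0$.
   Context: A semiholomorphic foliation is a real $C^\infty$ foliation of real codimension $2$ whose leaves are holomorphic curves. In coordinates as in the statement, the slope $\lambda$ satisfies $\frac{\partial\lambda}{\partial\bar x}+\bar\lambda\frac{\partial\lambda}{\partial\bar y}=0$, and the leaves are the graphs of holomorphic functions $y=\varphi(x)$ with $\varphi'(x)=\lambda(x,\varphi(x))$. *)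

theory Defs
  imports "HOL-Analysis.Analysis"
begin

fun ddir :: "'a::real_normed_vector list \<Rightarrow> ('a \<Rightarrow> 'b::real_normed_vector) \<Rightarrow> 'a \<Rightarrow> 'b" where
  "ddir [] f = f"
| "ddir (v # vs) f = (\<lambda>p. frechet_derivative (ddir vs f) (at p) v)"

text \<open>Real C-infinity on an open set: all iterated real derivatives exist (everywhere
  differentiable to all orders, which on an open set is the same as C-infinity).\<close>
definition smooth_on :: "'a::real_normed_vector set \<Rightarrow> ('a \<Rightarrow> 'b::real_normed_vector) \<Rightarrow> bool" where
  "smooth_on U f \<longleftrightarrow> (\<forall>vs. \<forall>p\<in>U. ddir vs f differentiable (at p))"

definition dbar_x :: "(complex \<times> complex \<Rightarrow> complex) \<Rightarrow> complex \<times> complex \<Rightarrow> complex" where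
  "dbar_x f p = (frechet_derivative f (at p) (1, 0) + \<i> * frechet_derivative f (at p) (\<i>, 0)) / 2"

definition dbar_y :: "(complex \<times> complex \<Rightarrow> complex) \<Rightarrow> complex \<times> complex \<Rightarrow> complex" where
  "dbar_y f p = (frechet_derivative f (at p) (0, 1) + \<i> * frechet_derivative f (at p) (0, \<i>)) / 2"

definition dbar :: "(complex \<Rightarrow> complex) \<Rightarrow> complex \<Rightarrow> complex" where
  "dbar f z = (frechet_derivative f (at z) 1 + \<i> * frechet_derivative f (at z) \<i>) / 2"

end

theory Submission
  imports Defs "HOL-Complex_Analysis.Complex_Analysis"
begin

text \<open>Applying \<open>dbar_y\<close> to the foliation equation \<open>dbar_x \<lambda> + cnj \<lambda> * dbar_y \<lambda> = 0\<close> and commuting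
  the Wirtinger derivatives shows that \<open>b\<^sub>L x = dbar_y \<lambda> (x, \<phi> x)\<close> solves the linear equation
  \<open>dbar b\<^sub>L = c * b\<^sub>L\<close> with the \<open>C\<^sup>1\<close> coefficient \<open>c x = - cnj (d_y \<lambda> (x, \<phi> x))\<close>, because the leaf
  has slope \<open>\<lambda>\<close>. By the similarity principle, locally \<open>b\<^sub>L = exp g * h\<close> with \<open>h\<close> holomorphic, where
  \<open>dbar g = c\<close> is solved by the Cauchy transform of a cut-off of \<open>c\<close>. Hence the zeros of \<open>b\<^sub>L\<close> are
  locally the zeros of a holomorphic function: the identity theorem and the connectedness of \<open>D\<close>
  give the dichotomy, and at any zero \<open>dbar b\<^sub>L = c * b\<^sub>L = 0\<close>.\<close>

section \<open>Wirtinger derivatives of real-linear maps of the plane\<close>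

definition dbar_linear :: "(complex \<Rightarrow> complex) \<Rightarrow> complex" where
  "dbar_linear T = (T 1 + \<i> * T \<i>) / 2"

lemma dbar_eq_dbar_linear: "dbar f z = dbar_linear (frechet_derivative f (at z))"
  by (simp add: dbar_def dbar_linear_def)

lemma linear_complex_eq:
  assumes "linear T"
  shows "T w = of_real (Re w) * T 1 + of_real (Im w) * T \<i>"
proof -
  have "w = Re w *\<^sub>R 1 + Im w *\<^sub>R \<i>" by (simp add: complex_eq_iff)
  then have "T w = T (Re w *\<^sub>R 1 + Im w *\<^sub>R \<i>)" by simp
  also have "\<dots> = Re w *\<^sub>R T 1 + Im w *\<^sub>R T \<i>"
    using assms by (simp add: linear_add linear_scale)
  finally show ?thesis by (simp add: scaleR_conv_of_real)
qed

lemma dbar_linear_rotate: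
  assumes "linear T"
  shows "dbar_linear T * cis (- \<theta>) = (T (cis \<theta>) + \<i> * T (\<i> * cis \<theta>)) / 2"
proof -
  have rot: "T (cis \<theta>) = of_real (cos \<theta>) * T 1 + of_real (sin \<theta>) * T \<i>"
    using linear_complex_eq[OF assms, of "cis \<theta>"] by simp
  have rot_i: "T (\<i> * cis \<theta>) = of_real (- sin \<theta>) * T 1 + of_real (cos \<theta>) * T \<i>"
    using linear_complex_eq[OF assms, of "\<i> * cis \<theta>"] by simp
  show ?thesis unfolding rot rot_i
    by (simp add: dbar_linear_def cis.code complex_eq_iff algebra_simps)
qed

lemma has_field_derivative_if_dbar_linear_eq_0:
  assumes h: "(h has_derivative T) (at z)" and T: "dbar_linear T = 0"
  shows "(h has_field_derivative T 1) (at z)"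
proof -
  have "T 1 + \<i> * T \<i> = 0"
    using T by (simp add: dbar_linear_def)
  then have Ti: "T \<i> = \<i> * T 1"
    by (metis add_eq_0_iff i_squared mult.assoc mult_minus_left mult_1 minus_minus)
  have "T = (*) (T 1)"
  proof
    fix w
    have "T w = T 1 * (of_real (Re w) + \<i> * of_real (Im w))"
      unfolding linear_complex_eq[OF has_derivative_linear[OF h], of w] Ti
      by (simp add: algebra_simps)
    then show "T w = T 1 * w" by (metis complex_eq)
  qed
  with h show ?thesis by (simp add: has_field_derivative_def)
qed

lemma continuous_on_Blinfun_complex:
  fixes T :: "'a::topological_space \<Rightarrow> complex \<Rightarrow> complex"
  assumes lin: "\<And>p. p \<in> S \<Longrightarrow> linear (T p)"
    and cont: "\<And>v. continuous_on S (\<lambda>p. T p v)"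
  shows "continuous_on S (\<lambda>p. Blinfun (T p))"
proof -
  define B where
    "B p = (blinfun_scaleR_left (T p 1) o\<^sub>L Blinfun Re) + (blinfun_scaleR_left (T p \<i>) o\<^sub>L Blinfun Im)" for p
  have eq: "Blinfun (T p) = B p" if "p \<in> S" for p
  proof (rule blinfun_eqI)
    fix w
    have "bounded_linear (T p)" using lin[OF that] linear_conv_bounded_linear by blast
    then show "blinfun_apply (Blinfun (T p)) w = blinfun_apply (B p) w"
      using linear_complex_eq[OF lin[OF that], of w]
      by (simp add: B_def bounded_linear_Blinfun_apply bounded_linear_Re bounded_linear_Im
          scaleR_conv_of_real plus_blinfun.rep_eq)
  qed
  have "continuous_on S B"
    unfolding B_def by (intro continuous_intros cont)
  then show ?thesis
    by (rule continuous_on_cong[THEN iffD1, rotated 2]) (simp_all add: eq)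
qed

section \<open>Solving the inhomogeneous Cauchy-Riemann equation\<close>

lemma has_vector_derivative_circle_integral:
  fixes C :: "complex \<Rightarrow> 'a::banach" and DC :: "complex \<Rightarrow> complex \<Rightarrow>\<^sub>L 'a"
  assumes deriv: "\<And>p. (C has_derivative DC p) (at p)"
    and cont: "continuous_on UNIV DC"
  shows "((\<lambda>r. integral {0..2*pi} (\<lambda>\<theta>. C (z + of_real r * cis \<theta>))) has_vector_derivative
           integral {0..2*pi} (\<lambda>\<theta>. DC (z + of_real r * cis \<theta>) (cis \<theta>))) (at r)"
proof -
  have contC: "continuous_on UNIV C"
    by (rule continuous_at_imp_continuous_on) (use deriv has_derivative_continuous in blast)
  have "((\<lambda>r. integral (cbox 0 (2*pi)) (\<lambda>\<theta>. C (z + of_real r * cis \<theta>))) has_vector_derivative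
           integral (cbox 0 (2*pi)) (\<lambda>\<theta>. DC (z + of_real r * cis \<theta>) (cis \<theta>))) (at r within UNIV)"
  proof (rule leibniz_rule_vector_derivative)
    fix s \<theta> :: real
    have "((\<lambda>s. z + of_real s * cis \<theta>) has_derivative (\<lambda>h. h *\<^sub>R cis \<theta>)) (at s)"
      unfolding scaleR_conv_of_real[symmetric] by (rule derivative_eq_intros refl | simp)+
    from has_derivative_compose[OF this deriv]
    show "((\<lambda>s. C (z + of_real s * cis \<theta>)) has_vector_derivative DC (z + of_real s * cis \<theta>) (cis \<theta>))
        (at s within UNIV)"
      by (simp add: has_vector_derivative_def blinfun.scaleR_right o_def)
  next
    fix s :: real
    show "(\<lambda>\<theta>. C (z + of_real s * cis \<theta>)) integrable_on cbox 0 (2*pi)"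
      by (intro integrable_continuous continuous_on_compose2[OF contC] continuous_intros) auto
  next
    show "continuous_on (UNIV \<times> cbox 0 (2 * pi)) (\<lambda>(s, \<theta>). DC (z + of_real s * cis \<theta>) (cis \<theta>))"
      unfolding split_beta by (intro continuous_intros continuous_on_compose2[OF cont]) auto
  qed auto
  then show ?thesis by (simp add: cbox_interval)
qed

lemma circle_integral_tangential_derivative_eq_0:
  fixes C :: "complex \<Rightarrow> 'a::banach"
  assumes deriv: "\<And>p. (C has_derivative DC p) (at p)" and r: "r \<noteq> 0"
  shows "((\<lambda>\<theta>. DC (z + of_real r * cis \<theta>) (\<i> * cis \<theta>)) has_integral 0) {0..2*pi}"
proof -
  have lin: "linear (DC p)" for p
    using deriv has_derivative_linear by blast
  have "((\<lambda>\<theta>. C (z + of_real r * cis \<theta>)) has_vector_derivative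
      r *\<^sub>R DC (z + of_real r * cis \<theta>) (\<i> * cis \<theta>)) (at \<theta> within {0..2*pi})" for \<theta>
  proof -
    have "((\<lambda>\<theta>. z + of_real r * cis \<theta>) has_derivative (\<lambda>h. h *\<^sub>R (r *\<^sub>R (\<i> * cis \<theta>))))
        (at \<theta> within {0..2*pi})"
      by (rule derivative_eq_intros refl | simp add: fun_eq_iff scaleR_conv_of_real algebra_simps)+
    from has_derivative_compose[OF this deriv]
    show ?thesis
      by (simp add: has_vector_derivative_def o_def linear_scale[OF lin])
  qed
  then have "((\<lambda>\<theta>. r *\<^sub>R DC (z + of_real r * cis \<theta>) (\<i> * cis \<theta>)) has_integral 0) {0..2*pi}"
    using fundamental_theorem_of_calculus[of 0 "2*pi" "\<lambda>\<theta>. C (z + of_real r * cis \<theta>)"]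
    by (simp add: cis_2pi)
  from has_integral_cmul[OF this, of "1/r"] r show ?thesis
    by simp
qed

text \<open>In polar coordinates \<open>\<zeta> = z + r cis \<theta>\<close> the area element \<open>r dr d\<theta>\<close> cancels the Cauchy kernel
  \<open>1 / (\<zeta> - z) = cis (-\<theta>) / r\<close>; this is the Cauchy-Pompeiu formula for \<open>C\<close> vanishing on the
  circle of radius \<open>R\<close>.\<close>
lemma cauchy_pompeiu_polar:
  fixes DC :: "complex \<Rightarrow> complex \<Rightarrow>\<^sub>L complex"
  assumes deriv: "\<And>p. (C has_derivative DC p) (at p)"
    and cont: "continuous_on UNIV DC"
    and R: "0 \<le> R" and vanish: "\<And>\<theta>. C (z + of_real R * cis \<theta>) = 0"
  shows "integral (cbox (0, 0) (R, 2*pi))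
           (\<lambda>(r, \<theta>). dbar_linear (DC (z + of_real r * cis \<theta>)) * cis (- \<theta>)) = - of_real pi * C z"
proof -
  define H where "H = (\<lambda>(r, \<theta>). dbar_linear (DC (z + of_real r * cis \<theta>)) * cis (- \<theta>))"
  define F where "F r = integral {0..2*pi} (\<lambda>\<theta>. C (z + of_real r * cis \<theta>))" for r
  define F' where "F' r = integral {0..2*pi} (\<lambda>\<theta>. DC (z + of_real r * cis \<theta>) (cis \<theta>))" for r
  have "continuous_on (cbox (0, 0) (R, 2*pi)) H"
    unfolding H_def dbar_linear_def split_beta
    by (intro continuous_intros continuous_on_compose2[OF cont]) auto
  from integral_prod_continuous[OF this]
  have fubini:
    "integral (cbox (0, 0) (R, 2*pi)) H = integral {0..R} (\<lambda>r. integral {0..2*pi} (\<lambda>\<theta>. H (r, \<theta>)))"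
    by (simp add: cbox_interval)
  have inner: "((\<lambda>\<theta>. H (r, \<theta>)) has_integral F' r / 2) {0..2*pi}" if "r \<noteq> 0" for r
  proof -
    have "((\<lambda>\<theta>. DC (z + of_real r * cis \<theta>) (cis \<theta>)) has_integral F' r) {0..2*pi}"
      unfolding F'_def
      by (intro integrable_integral integrable_continuous_interval continuous_intros
          continuous_on_compose2[OF cont]) auto
    moreover have "((\<lambda>\<theta>. DC (z + of_real r * cis \<theta>) (\<i> * cis \<theta>)) has_integral 0) {0..2*pi}"
      by (rule circle_integral_tangential_derivative_eq_0[OF deriv that])
    ultimately have "((\<lambda>\<theta>. (DC (z + of_real r * cis \<theta>) (cis \<theta>)
        + \<i> * DC (z + of_real r * cis \<theta>) (\<i> * cis \<theta>)) / 2)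
        has_integral (F' r + \<i> * 0) / 2) {0..2*pi}"
      by (intro has_integral_divide has_integral_add has_integral_mult_right)
    then show ?thesis
      by (simp add: H_def dbar_linear_rotate[OF bounded_linear.linear[OF blinfun.bounded_linear_right]])
  qed
  have "(F has_vector_derivative F' r) (at r within {0..R})" for r
    unfolding F_def F'_def
    by (rule has_vector_derivative_at_within,
        rule has_vector_derivative_circle_integral[OF deriv cont])
  then have "(F' has_integral F R - F 0) {0..R}"
    by (intro fundamental_theorem_of_calculus R)
  then have "((\<lambda>r. F' r / 2) has_integral (F R - F 0) / 2) {0..R}"
    by (rule has_integral_divide)
  then have "((\<lambda>r. integral {0..2*pi} (\<lambda>\<theta>. H (r, \<theta>))) has_integral (F R - F 0) / 2) {0..R}"
    by (rule has_integral_spike_finite[where S="{0}", rotated 2])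
      (use integral_unique[OF inner] in auto)
  moreover have "F R = 0" and "F 0 = of_real (2*pi) * C z"
    by (simp_all add: F_def vanish scaleR_conv_of_real)
  ultimately show ?thesis
    using fubini by (simp add: H_def integral_unique)
qed

lemma dbar_linear_integral:
  fixes F :: "'a::euclidean_space \<Rightarrow> complex \<Rightarrow>\<^sub>L complex"
  assumes "F integrable_on S"
  shows "dbar_linear (integral S F) = integral S (\<lambda>t. dbar_linear (F t))"
proof -
  have "bounded_linear (\<lambda>T :: complex \<Rightarrow>\<^sub>L complex. dbar_linear T)"
    unfolding dbar_linear_def
    by (intro bounded_linear_compose[OF bounded_linear_divide] bounded_linear_add
        bounded_linear_compose[OF bounded_linear_mult_right] blinfun.bounded_linear_left)
  from integral_linear[OF assms this] show ?thesis
    by (simp add: o_def)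
qed

text \<open>The Cauchy transform \<open>- 1/\<pi> \<integral> C \<zeta> / (\<zeta> - z) dA(\<zeta>)\<close>, integrated over the disc of radius \<open>R\<close>
  about \<open>z\<close> in polar coordinates.\<close>
definition cauchy_transform :: "real \<Rightarrow> (complex \<Rightarrow> complex) \<Rightarrow> complex \<Rightarrow> complex" where
  "cauchy_transform R C z =
     - of_real (1/pi) *
       integral (cbox (0, 0) (R, 2*pi)) (\<lambda>(r, \<theta>). C (z + of_real r * cis \<theta>) * cis (- \<theta>))"

lemma cauchy_transform_has_derivative:
  fixes R :: real and DC :: "complex \<Rightarrow> complex \<Rightarrow>\<^sub>L complex"
  assumes deriv: "\<And>p. (C has_derivative DC p) (at p)"
    and cont: "continuous_on UNIV DC"
  defines "B \<equiv> cbox (0::real, 0::real) (R, 2*pi)"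
  shows "(cauchy_transform R C has_derivative (\<lambda>v. - of_real (1/pi) *
            integral B (\<lambda>t. blinfun_mult_right (cis (- snd t)) o\<^sub>L
              DC (z + of_real (fst t) * cis (snd t))) v))
          (at z)"
proof -
  define q where "q z t = z + of_real (fst t) * cis (snd t)" for z :: complex and t :: "real \<times> real"
  define fx where "fx z t = blinfun_mult_right (cis (- snd t)) o\<^sub>L DC (q z t)" for z t
  have contC: "continuous_on UNIV C"
    by (rule continuous_at_imp_continuous_on) (use deriv has_derivative_continuous in blast)
  have I: "((\<lambda>z. integral B (\<lambda>t. C (q z t) * cis (- snd t))) has_derivative integral B (fx z))
      (at z within UNIV)"
    unfolding B_def
  proof (rule leibniz_rule)
    fix z t
    have "((\<lambda>z. q z t) has_derivative id) (at z)"
      unfolding q_def by (rule derivative_eq_intros refl | simp add: id_def)+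
    from has_derivative_mult_left[OF has_derivative_compose[OF this deriv], of "cis (- snd t)"]
    show "((\<lambda>z. C (q z t) * cis (- snd t)) has_derivative fx z t) (at z within UNIV)"
      by (rule has_derivative_eq_rhs) (simp add: fx_def o_def fun_eq_iff)
  next
    fix z
    show "(\<lambda>t. C (q z t) * cis (- snd t)) integrable_on cbox (0, 0) (R, 2 * pi)"
      unfolding q_def
      by (intro integrable_continuous continuous_intros continuous_on_compose2[OF contC]) auto
  next
    show "continuous_on (UNIV \<times> cbox (0, 0) (R, 2 * pi)) (\<lambda>(z, t). fx z t)"
      unfolding split_beta fx_def q_def
      by (intro continuous_intros continuous_on_compose2[OF cont]) auto
  qed auto
  have "cauchy_transform R C = (\<lambda>z. - of_real (1/pi) * integral B (\<lambda>t. C (q z t) * cis (- snd t)))"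
    by (simp add: fun_eq_iff cauchy_transform_def case_prod_beta' B_def q_def)
  with has_derivative_mult_right[OF I, of "- of_real (1/pi)"] show ?thesis
    by (simp add: fx_def[abs_def] q_def)
qed

lemma dbar_cauchy_transform:
  fixes DC :: "complex \<Rightarrow> complex \<Rightarrow>\<^sub>L complex"
  assumes deriv: "\<And>p. (C has_derivative DC p) (at p)"
    and cont: "continuous_on UNIV DC"
    and R: "0 \<le> R" and vanish: "\<And>\<theta>. C (z + of_real R * cis \<theta>) = 0"
  shows "dbar (cauchy_transform R C) z = C z"
proof -
  define B where "B = cbox (0::real, 0::real) (R, 2*pi)"
  define fx where
    "fx = (\<lambda>t. blinfun_mult_right (cis (- snd t)) o\<^sub>L DC (z + of_real (fst t) * cis (snd t)))"
  have "fx integrable_on B"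
    unfolding B_def fx_def
    by (intro integrable_continuous continuous_intros continuous_on_compose2[OF cont]) auto
  then have "dbar_linear (integral B fx) = integral B (\<lambda>t. dbar_linear (fx t))"
    by (rule dbar_linear_integral)
  also have "\<dots> = integral B (\<lambda>(r, \<theta>). dbar_linear (DC (z + of_real r * cis \<theta>)) * cis (- \<theta>))"
    by (simp add: fx_def dbar_linear_def field_simps case_prod_beta')
  also have "\<dots> = - of_real pi * C z"
    unfolding B_def by (rule cauchy_pompeiu_polar[OF deriv cont R vanish])
  finally have "dbar_linear (integral B fx) = - of_real pi * C z" .
  moreover have "dbar (cauchy_transform R C) z = - of_real (1/pi) * dbar_linear (integral B fx)"
    unfolding dbar_eq_dbar_linear
      frechet_derivative_at[OF cauchy_transform_has_derivative[OF deriv cont], symmetric]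
    by (simp add: dbar_linear_def algebra_simps B_def fx_def)
  ultimately show ?thesis
    by simp
qed

section \<open>Cut-off functions\<close>

definition sq_pos :: "real \<Rightarrow> real" where
  "sq_pos s = (max 0 s)\<^sup>2"

lemma sq_pos_has_real_derivative: "(sq_pos has_real_derivative 2 * max 0 s) (at s)"
proof (cases s "0::real" rule: linorder_cases)
  case less
  have "((\<lambda>_. 0) has_real_derivative 2 * max 0 s) (at s)"
    using less by simp
  then show ?thesis
    by (rule has_field_derivative_transform_within_open[where S="{..<0}"])
      (use less in \<open>auto simp: sq_pos_def\<close>)
next
  case equal
  have "((\<lambda>y. max 0 y) \<longlongrightarrow> 0) (at (0::real))"
    using tendsto_max[OF tendsto_const tendsto_ident_at, of 0 0 UNIV] by simp
  moreover have "\<forall>\<^sub>F y in at 0. max 0 y = (sq_pos y - sq_pos 0) / (y - 0)"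
    unfolding eventually_at_filter by (auto simp: sq_pos_def max_def power2_eq_square)
  ultimately have "((\<lambda>y. (sq_pos y - sq_pos 0) / (y - 0)) \<longlongrightarrow> 2 * max 0 0) (at 0)"
    by (simp add: tendsto_cong)
  then show ?thesis
    using equal by (simp add: has_field_derivative_iff)
next
  case greater
  have "((\<lambda>y. y\<^sup>2) has_real_derivative 2 * max 0 s) (at s)"
    using greater by (auto intro!: derivative_eq_intros)
  then show ?thesis
    by (rule has_field_derivative_transform_within_open[where S="{0<..}"])
      (use greater in \<open>auto simp: sq_pos_def\<close>)
qed

definition step_down :: "real \<Rightarrow> real" where
  "step_down t = 1 - 2 * sq_pos (t - 1) + 4 * sq_pos (t - 3/2) - 2 * sq_pos (t - 2)"

definition step_down' :: "real \<Rightarrow> real" where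
  "step_down' t = - 4 * max 0 (t - 1) + 8 * max 0 (t - 3/2) - 4 * max 0 (t - 2)"

lemma step_down_has_real_derivative: "(step_down has_real_derivative step_down' t) (at t)"
  unfolding step_down_def step_down'_def
  by (rule derivative_eq_intros DERIV_chain2[OF sq_pos_has_real_derivative] | simp)+

lemma step_down_le_1: "t \<le> 1 \<Longrightarrow> step_down t = 1"
  by (simp add: step_down_def sq_pos_def)

lemma step_down_ge_2: "t \<ge> 2 \<Longrightarrow> step_down t = 0 \<and> step_down' t = 0"
  by (simp add: step_down_def step_down'_def sq_pos_def power2_eq_square algebra_simps)

lemma continuous_on_step_down': "continuous_on S step_down'"
  unfolding step_down'_def by (intro continuous_intros)

lemma C1_bump_exists:
  fixes x0 :: "'a::real_inner"
  assumes r: "0 < r"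
  obtains \<eta> :: "'a \<Rightarrow> real" and \<eta>'
  where "\<And>p. (\<eta> has_derivative \<eta>' p) (at p)" "\<And>v. continuous_on UNIV (\<lambda>p. \<eta>' p v)"
    and "\<And>p. dist x0 p \<le> r \<Longrightarrow> \<eta> p = 1"
    and "\<And>p v. dist x0 p \<ge> 3/2 * r \<Longrightarrow> \<eta> p = 0 \<and> \<eta>' p v = 0"
proof
  define n where "n p = ((p - x0) \<bullet> (p - x0)) * (1 / r\<^sup>2)" for p
  define n' where "n' p v = 2 * ((p - x0) \<bullet> v) * (1 / r\<^sup>2)" for p v
  have n_eq: "n p = (dist x0 p / r)\<^sup>2" for p
    by (simp add: n_def dist_norm norm_minus_commute power_divide power2_norm_eq_inner)
  show "((\<lambda>p. step_down (n p)) has_derivative (\<lambda>v. step_down' (n p) * n' p v)) (at p)" for p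
  proof -
    have n: "(n has_derivative n' p) (at p)"
      unfolding n_def n'_def by (rule derivative_eq_intros refl | simp add: inner_commute)+
    from has_derivative_compose[OF n step_down_has_real_derivative[unfolded has_field_derivative_def]]
    show ?thesis by (simp add: o_def)
  qed
  show "continuous_on UNIV (\<lambda>p. step_down' (n p) * n' p v)" for v
    unfolding n_def n'_def
    by (intro continuous_intros continuous_on_compose2[OF continuous_on_step_down']) auto
  show "step_down (n p) = 1" if "dist x0 p \<le> r" for p
  proof (rule step_down_le_1)
    have "dist x0 p / r \<le> 1" using that r by simp
    then show "n p \<le> 1"
      unfolding n_eq using r by (simp add: power_le_one)
  qed
  show "step_down (n p) = 0 \<and> step_down' (n p) * n' p v = 0" if "dist x0 p \<ge> 3/2 * r" for p v
  proof -
    have "3/2 \<le> dist x0 p / r" using that r by (simp add: field_simps)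
    then have "(3/2)\<^sup>2 \<le> n p"
      unfolding n_eq by (rule power_mono) simp
    then show ?thesis
      using step_down_ge_2[of "n p"] by (simp add: power2_eq_square)
  qed
qed

lemma zero_extension_has_derivative:
  assumes g: "\<And>p. p \<in> ball x0 \<epsilon> \<Longrightarrow> (g has_derivative g' p) (at p)"
    and vanish: "\<And>p. p \<in> ball x0 \<epsilon> \<Longrightarrow> \<rho> < dist x0 p \<Longrightarrow> g p = 0" and \<rho>: "\<rho> < \<epsilon>"
  shows "((\<lambda>p. if dist x0 p < \<epsilon> then g p else 0) has_derivative
    (\<lambda>v. if dist x0 p < \<epsilon> then g' p v else 0)) (at p)"
proof (cases "dist x0 p < \<epsilon>")
  case True
  then have "(g has_derivative (\<lambda>v. if dist x0 p < \<epsilon> then g' p v else 0)) (at p)"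
    using g by simp
  then show ?thesis
    by (rule has_derivative_transform_within_open[where s="ball x0 \<epsilon>"]) (use True in auto)
next
  case False
  have F: "open {q. \<rho> < dist x0 q}"
    by (intro open_Collect_less continuous_intros)
  have "((\<lambda>q. 0) has_derivative (\<lambda>v. if dist x0 p < \<epsilon> then g' p v else 0)) (at p)"
    using False by simp
  then show ?thesis
    by (rule has_derivative_transform_within_open[OF _ F]) (use False \<rho> vanish in auto)
qed

lemma zero_extension_continuous_on:
  assumes h: "continuous_on (ball x0 \<epsilon>) h"
    and vanish: "\<And>p. p \<in> ball x0 \<epsilon> \<Longrightarrow> \<rho> < dist x0 p \<Longrightarrow> h p = 0" and \<rho>: "\<rho> < \<epsilon>"
  shows "continuous_on UNIV (\<lambda>p. if dist x0 p < \<epsilon> then h p else 0)"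
proof -
  have "open {q. \<rho> < dist x0 q}"
    by (intro open_Collect_less continuous_intros)
  then have "continuous_on (ball x0 \<epsilon> \<union> {q. \<rho> < dist x0 q}) (\<lambda>p. if dist x0 p < \<epsilon> then h p else 0)"
  proof (rule continuous_on_open_Un[OF open_ball])
    show "continuous_on (ball x0 \<epsilon>) (\<lambda>p. if dist x0 p < \<epsilon> then h p else 0)"
      by (rule continuous_on_cong[THEN iffD1, OF refl _ h]) simp
    show "continuous_on {q. \<rho> < dist x0 q} (\<lambda>p. if dist x0 p < \<epsilon> then h p else 0)"
      by (rule continuous_on_cong[THEN iffD1, OF refl _ continuous_on_const[of _ 0]])
        (simp add: vanish)
  qed
  moreover have "ball x0 \<epsilon> \<union> {q. \<rho> < dist x0 q} = UNIV"
    using \<rho> by auto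
  ultimately show ?thesis
    by simp
qed

lemma C1_cutoff_exists:
  fixes c :: "complex \<Rightarrow> complex"
  assumes \<epsilon>: "0 < \<epsilon>"
    and c: "\<And>p. p \<in> ball x0 \<epsilon> \<Longrightarrow> c differentiable (at p)"
    and c_C1: "\<And>v. continuous_on (ball x0 \<epsilon>) (\<lambda>p. frechet_derivative c (at p) v)"
  obtains C DC where "\<And>p. (C has_derivative blinfun_apply (DC p)) (at p)" "continuous_on UNIV DC"
    and "\<And>p. dist x0 p > \<epsilon>*3/4 \<Longrightarrow> C p = 0" and "\<And>p. p \<in> ball x0 (\<epsilon>/2) \<Longrightarrow> C p = c p"
proof -
  obtain \<eta> :: "complex \<Rightarrow> real" and \<eta>'
    where \<eta>: "\<And>p. (\<eta> has_derivative \<eta>' p) (at p)" and \<eta>'_cont: "\<And>v. continuous_on UNIV (\<lambda>p. \<eta>' p v)"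
      and \<eta>_near: "\<And>p. dist x0 p \<le> \<epsilon>/2 \<Longrightarrow> \<eta> p = 1"
      and \<eta>_far: "\<And>p v. dist x0 p \<ge> 3/2 * (\<epsilon>/2) \<Longrightarrow> \<eta> p = 0 \<and> \<eta>' p v = 0"
    using C1_bump_exists[of "\<epsilon>/2" x0] \<epsilon> by auto
  define g' where "g' p v = of_real (\<eta>' p v) * c p + of_real (\<eta> p) * frechet_derivative c (at p) v"
    for p v
  define C where "C p = (if dist x0 p < \<epsilon> then of_real (\<eta> p) * c p else 0)" for p
  define D' where "D' p v = (if dist x0 p < \<epsilon> then g' p v else 0)" for p v
  have \<rho>: "\<epsilon>*3/4 < \<epsilon>"
    using \<epsilon> by simp
  have "((\<lambda>q. of_real (\<eta> q) * c q) has_derivative g' p) (at p)" if "p \<in> ball x0 \<epsilon>" for p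
    using c[OF that] unfolding g'_def
    by (auto intro!: derivative_eq_intros \<eta> simp: frechet_derivative_works[symmetric] algebra_simps)
  then have C_deriv: "(C has_derivative D' p) (at p)" for p
    unfolding C_def D'_def[abs_def] using \<eta>_far \<rho>
    by (intro zero_extension_has_derivative[where \<rho>="\<epsilon>*3/4"]) auto
  have "continuous_on (ball x0 \<epsilon>) c"
    using c differentiable_imp_continuous_within continuous_on_eq_continuous_at[OF open_ball]
    by blast
  then have "continuous_on (ball x0 \<epsilon>) (\<lambda>p. g' p v)" for v
    unfolding g'_def
    by (intro continuous_intros c_C1 continuous_on_subset[OF \<eta>'_cont]
        continuous_on_subset[OF has_derivative_continuous_on[OF \<eta>]]) auto
  then have "continuous_on UNIV (\<lambda>p. D' p v)" for v
    unfolding D'_def using \<eta>_far \<rho>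
    by (intro zero_extension_continuous_on[where \<rho>="\<epsilon>*3/4"]) (auto simp: g'_def)
  then have "continuous_on UNIV (\<lambda>p. Blinfun (D' p))"
    using C_deriv by (intro continuous_on_Blinfun_complex) (auto intro: has_derivative_linear)
  moreover have "(C has_derivative blinfun_apply (Blinfun (D' p))) (at p)" for p
    using C_deriv[of p] by (simp add: bounded_linear_Blinfun_apply has_derivative_bounded_linear)
  moreover have "C p = 0" if "dist x0 p > \<epsilon>*3/4" for p
    using \<eta>_far[of p] that unfolding C_def by auto
  moreover have "C p = c p" if "p \<in> ball x0 (\<epsilon>/2)" for p
    using \<eta>_near[of p] that \<epsilon> unfolding C_def by auto
  ultimately show ?thesis
    using that[of C "\<lambda>p. Blinfun (D' p)"] by blast
qed

section \<open>The similarity principle\<close>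

lemma field_differentiable_exp_minus_mult:
  assumes f: "f differentiable (at x)" and g: "g differentiable (at x)"
    and dbar_f: "dbar f x = dbar g x * f x"
  shows "(\<lambda>x. exp (- g x) * f x) field_differentiable (at x)"
proof -
  define Dg where "Dg = frechet_derivative g (at x)"
  define Df where "Df = frechet_derivative f (at x)"
  have Dg: "(g has_derivative Dg) (at x)" and Df: "(f has_derivative Df) (at x)"
    using f g by (simp_all add: Dg_def Df_def frechet_derivative_works)
  have "((\<lambda>y. exp (- g y)) has_derivative (\<lambda>v. exp (- g x) * - Dg v)) (at x)"
    using has_derivative_compose[OF has_derivative_minus[OF Dg]
        DERIV_exp[unfolded has_field_derivative_def]]
    by (simp add: o_def)
  from has_derivative_mult[OF this Df]
  have "((\<lambda>x. exp (- g x) * f x) has_derivative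
    (\<lambda>v. exp (- g x) * Df v + exp (- g x) * - Dg v * f x)) (at x)" .
  moreover have "dbar_linear (\<lambda>v. exp (- g x) * Df v + exp (- g x) * - Dg v * f x)
      = exp (- g x) * (dbar_linear Df - dbar_linear Dg * f x)"
    by (simp add: dbar_linear_def field_simps)
  ultimately show ?thesis
    using has_field_derivative_if_dbar_linear_eq_0 dbar_f field_differentiable_def
    by (fastforce simp: dbar_eq_dbar_linear Dg_def Df_def)
qed

locale dbar_mult_equation =
  fixes D :: "complex set" and f c :: "complex \<Rightarrow> complex"
  assumes open_D: "open D"
    and f_differentiable: "\<And>x. x \<in> D \<Longrightarrow> f differentiable (at x)"
    and c_differentiable: "\<And>x. x \<in> D \<Longrightarrow> c differentiable (at x)"
    and c_C1: "\<And>v. continuous_on D (\<lambda>x. frechet_derivative c (at x) v)"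
    and dbar_eq: "\<And>x. x \<in> D \<Longrightarrow> dbar f x = c x * f x"
begin

lemma similarity_principle:
  assumes x0: "x0 \<in> D"
  obtains r h g where "0 < r" "ball x0 r \<subseteq> D" "h holomorphic_on ball x0 r"
    and "\<And>x. x \<in> ball x0 r \<Longrightarrow> f x = exp (g x) * h x"
proof -
  obtain \<epsilon> where \<epsilon>: "\<epsilon> > 0" and \<epsilon>_D: "ball x0 \<epsilon> \<subseteq> D"
    using open_D x0 open_contains_ball by blast
  obtain C DC where C_deriv: "\<And>p. (C has_derivative blinfun_apply (DC p)) (at p)"
      and DC_cont: "continuous_on UNIV DC" and C_far: "\<And>p. dist x0 p > \<epsilon>*3/4 \<Longrightarrow> C p = 0"
      and C_near: "\<And>p. p \<in> ball x0 (\<epsilon>/2) \<Longrightarrow> C p = c p"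
    using C1_cutoff_exists[OF \<epsilon>, of x0 c] c_differentiable \<epsilon>_D continuous_on_subset[OF c_C1 \<epsilon>_D]
    by blast
  define g where "g = cauchy_transform \<epsilon> C"
  define r where "r = \<epsilon>/4"
  have r: "r > 0" "ball x0 r \<subseteq> D"
    using \<epsilon> \<epsilon>_D by (auto simp: r_def)
  have dbar_g: "dbar g x = C x" if "x \<in> ball x0 r" for x
    unfolding g_def
  proof (rule dbar_cauchy_transform[OF C_deriv DC_cont])
    show "C (x + of_real \<epsilon> * cis \<theta>) = 0" for \<theta>
    proof (rule C_far)
      have "\<epsilon> \<le> dist x0 (x + of_real \<epsilon> * cis \<theta>) + dist x0 x"
        using norm_triangle_ineq[of "(x + of_real \<epsilon> * cis \<theta>) - x0" "x0 - x"] \<epsilon>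
        by (simp add: dist_norm norm_minus_commute norm_mult)
      with that show "dist x0 (x + of_real \<epsilon> * cis \<theta>) > \<epsilon>*3/4"
        by (simp add: r_def)
    qed
  qed (use \<epsilon> in simp)
  define h where "h x = exp (- g x) * f x" for x
  have "h field_differentiable at x" if x: "x \<in> ball x0 r" for x
    unfolding h_def
  proof (rule field_differentiable_exp_minus_mult)
    have "x \<in> D" "x \<in> ball x0 (\<epsilon>/2)"
      using x r unfolding r_def by auto
    then show "f differentiable (at x)" "dbar f x = dbar g x * f x"
      using f_differentiable dbar_eq dbar_g[OF x] C_near by auto
    show "g differentiable (at x)"
      unfolding g_def using cauchy_transform_has_derivative[OF C_deriv DC_cont]
      by (rule differentiableI)
  qed
  then have "h holomorphic_on ball x0 r"
    by (simp add: holomorphic_on_def field_differentiable_at_within)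
  moreover have "f x = exp (g x) * h x" for x
    by (simp add: h_def exp_minus_inverse mult.assoc[symmetric])
  ultimately show ?thesis
    using that r by blast
qed

lemma vanishes_near_limit_zero:
  assumes "x \<in> D" and "x islimpt {x\<in>D. f x = 0}"
  shows "\<exists>r>0. ball x r \<subseteq> D \<and> (\<forall>y\<in>ball x r. f y = 0)"
proof -
  obtain r h g where r: "r > 0" "ball x r \<subseteq> D" and h: "h holomorphic_on ball x r"
      and f_eq: "\<And>y. y \<in> ball x r \<Longrightarrow> f y = exp (g y) * h y"
    using similarity_principle[OF assms(1)] by metis
  have limpt: "x islimpt ({x\<in>D. f x = 0} \<inter> ball x r)"
    by (rule islimpt_Int_eventually[OF assms(2)], rule eventually_at_in_open'[OF open_ball])
      (use r in simp)
  have "h y = 0" if "y \<in> ball x r" for y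
    by (rule analytic_continuation[OF h open_ball connected_ball _ _ limpt _ that])
      (use r f_eq in auto)
  then show ?thesis
    using r f_eq by auto
qed

lemma zeros_sparse_or_all:
  assumes "connected D"
  shows "{x\<in>D. f x = 0} sparse_in D \<or> {x\<in>D. f x = 0} = D"
proof -
  define Z where "Z = {x\<in>D. f x = 0}"
  define A where "A = {x\<in>D. x islimpt Z}"
  have "open A"
  proof (rule openI)
    fix x assume "x \<in> A"
    then obtain r where r: "r > 0" "ball x r \<subseteq> D" "\<forall>y\<in>ball x r. f y = 0"
      using vanishes_near_limit_zero[of x] \<open>x \<in> A\<close> unfolding A_def Z_def by auto
    then have "ball x r \<subseteq> A"
      unfolding A_def Z_def by (auto simp: islimpt_ball intro: islimpt_subset[of _ "ball x r"])
    then show "\<exists>e>0. ball x e \<subseteq> A"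
      using r by blast
  qed
  then have "openin (top_of_set D) A"
    by (rule open_subset[rotated]) (auto simp: A_def)
  moreover have "closedin (top_of_set D) A"
    using closed_limpts[of Z] by (simp add: A_def closedin_closed_Int Collect_conj_eq Int_commute)
  ultimately have "A = {} \<or> A = D"
    using assms connected_clopen by blast
  then show ?thesis
  proof
    assume "A = {}"
    then show ?thesis
      using sparse_in_open[OF open_D] unfolding A_def Z_def by blast
  next
    assume "A = D"
    have "f x = 0" if x: "x \<in> D" for x
    proof -
      have "x islimpt Z"
        using \<open>A = D\<close> x unfolding A_def by blast
      then obtain r where "r > 0" "\<forall>y\<in>ball x r. f y = 0"
        using vanishes_near_limit_zero[OF x] unfolding Z_def by blast
      then show ?thesis
        by simp
    qed
    then show ?thesis
      by auto
  qed
qed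

end

section \<open>Second derivatives\<close>

lemma second_difference_mean_value:
  fixes f :: "'a::real_normed_vector \<Rightarrow> 'b::real_inner"
  assumes f_deriv: "\<And>q. q \<in> S \<Longrightarrow> (f has_derivative Df q) (at q)"
    and S: "\<And>x. x \<in> {0..1} \<Longrightarrow> p + (x * t) *\<^sub>R v + t *\<^sub>R w \<in> S \<and> p + (x * t) *\<^sub>R v \<in> S"
  obtains x where "x \<in> {0..1}"
    and "norm (f (p + t *\<^sub>R v + t *\<^sub>R w) - f (p + t *\<^sub>R v) - f (p + t *\<^sub>R w) + f p - t\<^sup>2 *\<^sub>R a)
      \<le> \<bar>t\<bar> * norm (Df (p + (x * t) *\<^sub>R v + t *\<^sub>R w) v - Df (p + (x * t) *\<^sub>R v) v - t *\<^sub>R a)"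
proof -
  define q1 where "q1 x = p + (x * t) *\<^sub>R v + t *\<^sub>R w" for x
  define q2 where "q2 x = p + (x * t) *\<^sub>R v" for x
  define G where "G x = f (q1 x) - f (q2 x) - (x * t\<^sup>2) *\<^sub>R a" for x
  define G' where "G' x h = (h * t) *\<^sub>R (Df (q1 x) v - Df (q2 x) v - t *\<^sub>R a)" for x h
  have G_deriv: "(G has_derivative G' x) (at x)" if x: "x \<in> {0..1}" for x
  proof -
    have q: "q1 x \<in> S" "q2 x \<in> S"
      using S[OF x] by (simp_all add: q1_def q2_def)
    have lin: "linear (Df (q1 x))" "linear (Df (q2 x))"
      using f_deriv[OF q(1)] f_deriv[OF q(2)] by (simp_all add: has_derivative_linear)
    have q1: "(q1 has_derivative (\<lambda>h. (h * t) *\<^sub>R v)) (at x)"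
      and q2: "(q2 has_derivative (\<lambda>h. (h * t) *\<^sub>R v)) (at x)"
      unfolding q1_def q2_def by (rule derivative_eq_intros refl | simp)+
    have "((\<lambda>x. f (q1 x)) has_derivative (\<lambda>h. (h * t) *\<^sub>R Df (q1 x) v)) (at x)"
      using has_derivative_compose[OF q1 f_deriv[OF q(1)]] linear_scale[OF lin(1)]
      by (simp add: o_def)
    moreover have "((\<lambda>x. f (q2 x)) has_derivative (\<lambda>h. (h * t) *\<^sub>R Df (q2 x) v)) (at x)"
      using has_derivative_compose[OF q2 f_deriv[OF q(2)]] linear_scale[OF lin(2)]
      by (simp add: o_def)
    ultimately show ?thesis
      unfolding G_def G'_def
      by (auto intro!: derivative_eq_intros simp: algebra_simps power2_eq_square)
  qed
  obtain x where x: "x \<in> {0<..<1}" and mvt: "norm (G 1 - G 0) \<le> norm (G' x (1 - 0))"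
    using mvt_general[OF zero_less_one _ G_deriv] G_deriv
    by (metis atLeastAtMost_iff continuous_at_imp_continuous_on has_derivative_continuous
        less_eq_real_def greaterThanLessThan_iff)
  moreover have
    "G 1 - G 0 = f (p + t *\<^sub>R v + t *\<^sub>R w) - f (p + t *\<^sub>R v) - f (p + t *\<^sub>R w) + f p - t\<^sup>2 *\<^sub>R a"
    by (simp add: G_def q1_def q2_def algebra_simps)
  ultimately show ?thesis
    using that[of x] by (simp add: G'_def q1_def q2_def)
qed

lemma second_difference_estimate:
  fixes f :: "'a::real_normed_vector \<Rightarrow> 'b::real_inner"
  assumes f_deriv: "\<And>q. norm (q - p) < d \<Longrightarrow> (f has_derivative Df q) (at q)"
    and A: "linear A" and \<epsilon>: "0 \<le> \<epsilon>"
    and Df_approx: "\<And>y. norm (y - p) < d \<Longrightarrow> norm (Df y v - Df p v - A (y - p)) \<le> \<epsilon> * norm (y - p)"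
    and t: "\<bar>t\<bar> * (norm v + norm w) < d"
  shows "norm (f (p + t *\<^sub>R v + t *\<^sub>R w) - f (p + t *\<^sub>R v) - f (p + t *\<^sub>R w) + f p - t\<^sup>2 *\<^sub>R A w)
    \<le> 2 * \<epsilon> * t\<^sup>2 * (norm v + norm w)"
proof -
  define K where "K = norm v + norm w"
  define q1 where "q1 x = p + (x * t) *\<^sub>R v + t *\<^sub>R w" for x
  define q2 where "q2 x = p + (x * t) *\<^sub>R v" for x
  have q_near: "norm (q1 x - p) \<le> \<bar>t\<bar> * K" "norm (q2 x - p) \<le> \<bar>t\<bar> * K" if "x \<in> {0..1}" for x
  proof -
    have "\<bar>x * t\<bar> \<le> \<bar>t\<bar>"
      using that by (simp add: abs_mult mult_left_le_one_le)
    then have xt: "\<bar>x * t\<bar> * norm v \<le> \<bar>t\<bar> * norm v"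
      by (simp add: mult_right_mono)
    have "0 \<le> \<bar>t\<bar> * norm w"
      by simp
    moreover have "norm (q1 x - p) \<le> \<bar>x * t\<bar> * norm v + \<bar>t\<bar> * norm w"
      using norm_triangle_ineq[of "(x * t) *\<^sub>R v" "t *\<^sub>R w"] by (simp add: q1_def)
    moreover have "norm (q2 x - p) = \<bar>x * t\<bar> * norm v"
      by (simp add: q2_def)
    ultimately show "norm (q1 x - p) \<le> \<bar>t\<bar> * K" "norm (q2 x - p) \<le> \<bar>t\<bar> * K"
      using xt unfolding K_def distrib_left by linarith+
  qed
  have q_ball: "norm (q1 x - p) < d" "norm (q2 x - p) < d" if "x \<in> {0..1}" for x
    using q_near[OF that] t by (auto simp: K_def)
  obtain x where x: "x \<in> {0..1}"
    and mvt: "norm (f (p + t *\<^sub>R v + t *\<^sub>R w) - f (p + t *\<^sub>R v) - f (p + t *\<^sub>R w) + f p - t\<^sup>2 *\<^sub>R A w)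
      \<le> \<bar>t\<bar> * norm (Df (q1 x) v - Df (q2 x) v - t *\<^sub>R A w)"
    using second_difference_mean_value[of "{q. norm (q - p) < d}", OF f_deriv,
        where t=t and v=v and w=w and a="A w"]
      q_ball
    unfolding q1_def q2_def by blast
  have "A (q1 x - p) - A (q2 x - p) = t *\<^sub>R A w"
    using A by (simp add: q1_def q2_def linear_diff linear_add linear_scale)
  then have "norm (Df (q1 x) v - Df (q2 x) v - t *\<^sub>R A w)
      = norm ((Df (q1 x) v - Df p v - A (q1 x - p)) - (Df (q2 x) v - Df p v - A (q2 x - p)))"
    by (simp add: algebra_simps)
  also have "\<dots> \<le> \<epsilon> * norm (q1 x - p) + \<epsilon> * norm (q2 x - p)"
    using Df_approx q_ball[OF x] by (intro order_trans[OF norm_triangle_ineq4 add_mono]) auto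
  also have "\<dots> \<le> \<epsilon> * (\<bar>t\<bar> * K) + \<epsilon> * (\<bar>t\<bar> * K)"
    using \<epsilon> q_near[OF x] by (intro add_mono mult_left_mono) auto
  finally have "norm (Df (q1 x) v - Df (q2 x) v - t *\<^sub>R A w) \<le> 2 * \<epsilon> * (\<bar>t\<bar> * K)"
    by (simp add: mult_ac)
  then have "\<bar>t\<bar> * norm (Df (q1 x) v - Df (q2 x) v - t *\<^sub>R A w) \<le> \<bar>t\<bar> * (2 * \<epsilon> * (\<bar>t\<bar> * K))"
    by (rule mult_left_mono) simp
  also have "\<dots> = 2 * \<epsilon> * t\<^sup>2 * (norm v + norm w)"
    by (simp add: K_def power2_eq_square algebra_simps abs_mult_self_eq)
  finally show ?thesis
    using mvt by linarith
qed

lemma second_difference_quotient_estimate: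
  fixes f :: "'a::real_normed_vector \<Rightarrow> 'b::real_inner"
  assumes f_deriv: "\<And>q. norm (q - p) < d \<Longrightarrow> (f has_derivative Df q) (at q)"
    and A: "linear A" and \<epsilon>: "0 \<le> \<epsilon>"
    and Df_approx: "\<And>y. norm (y - p) < d \<Longrightarrow> norm (Df y v - Df p v - A (y - p)) \<le> \<epsilon> * norm (y - p)"
    and t_small: "\<bar>t\<bar> * (norm v + norm w) < d" and t: "t \<noteq> 0"
  shows "norm ((1/t\<^sup>2) *\<^sub>R (f (p + t *\<^sub>R v + t *\<^sub>R w) - f (p + t *\<^sub>R v) - f (p + t *\<^sub>R w) + f p) - A w)
    \<le> 2 * \<epsilon> * (norm v + norm w)"
proof -
  define \<Delta> where "\<Delta> = f (p + t *\<^sub>R v + t *\<^sub>R w) - f (p + t *\<^sub>R v) - f (p + t *\<^sub>R w) + f p"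
  have estimate: "norm (\<Delta> - t\<^sup>2 *\<^sub>R A w) \<le> 2 * \<epsilon> * t\<^sup>2 * (norm v + norm w)"
    unfolding \<Delta>_def by (rule second_difference_estimate[OF f_deriv A \<epsilon> Df_approx t_small])
  have "(1/t\<^sup>2) *\<^sub>R \<Delta> - A w = (1/t\<^sup>2) *\<^sub>R (\<Delta> - t\<^sup>2 *\<^sub>R A w)"
    using t by (simp add: scaleR_diff_right)
  then have "norm ((1/t\<^sup>2) *\<^sub>R \<Delta> - A w) = norm (\<Delta> - t\<^sup>2 *\<^sub>R A w) / t\<^sup>2"
    by simp
  also have "\<dots> \<le> 2 * \<epsilon> * t\<^sup>2 * (norm v + norm w) / t\<^sup>2"
    by (rule divide_right_mono[OF estimate zero_le_power2])
  also have "\<dots> = 2 * \<epsilon> * (norm v + norm w)"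
    using t by simp
  finally show ?thesis
    by (simp add: \<Delta>_def)
qed

lemma second_difference_tendsto:
  fixes f :: "'a::real_normed_vector \<Rightarrow> 'b::real_inner"
  assumes U: "open U" "p \<in> U"
    and f_deriv: "\<And>q. q \<in> U \<Longrightarrow> (f has_derivative Df q) (at q)"
    and Dfv_deriv: "((\<lambda>q. Df q v) has_derivative A) (at p)"
  shows "((\<lambda>t. (1/t\<^sup>2) *\<^sub>R (f (p + t *\<^sub>R v + t *\<^sub>R w) - f (p + t *\<^sub>R v) - f (p + t *\<^sub>R w) + f p))
           \<longlongrightarrow> A w) (at 0)"
proof (rule LIM_I)
  fix r :: real
  assume r: "r > 0"
  define K where "K = norm v + norm w + 1"
  have K: "K > 0"
    by (simp add: K_def add_nonneg_pos)
  define \<epsilon> where "\<epsilon> = r / (4 * K)"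
  have \<epsilon>: "\<epsilon> > 0"
    using r K by (simp add: \<epsilon>_def)
  obtain d1 where d1: "d1 > 0"
    and approx: "\<And>y. norm (y - p) < d1 \<Longrightarrow> norm (Df y v - Df p v - A (y - p)) \<le> \<epsilon> * norm (y - p)"
    using Dfv_deriv \<epsilon> unfolding has_derivative_at_alt by blast
  obtain d2 where d2: "d2 > 0" "ball p d2 \<subseteq> U"
    using U open_contains_ball by blast
  define d where "d = min d1 d2"
  have "norm ((1/t\<^sup>2) *\<^sub>R (f (p + t *\<^sub>R v + t *\<^sub>R w) - f (p + t *\<^sub>R v) - f (p + t *\<^sub>R w) + f p)
      - A w) < r"
    if t: "t \<noteq> 0" "\<bar>t\<bar> < d / K" for t
  proof -
    have "\<bar>t\<bar> * (norm v + norm w) \<le> \<bar>t\<bar> * K"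
      by (simp add: K_def mult_left_mono)
    also have "\<dots> < d"
      using t K by (simp add: field_simps)
    finally have "norm ((1/t\<^sup>2) *\<^sub>R (f (p + t *\<^sub>R v + t *\<^sub>R w) - f (p + t *\<^sub>R v)
        - f (p + t *\<^sub>R w) + f p) - A w)
        \<le> 2 * \<epsilon> * (norm v + norm w)"
      using d2 f_deriv approx \<epsilon> has_derivative_linear[OF Dfv_deriv] t
      by (intro second_difference_quotient_estimate[where d=d])
        (auto simp: d_def dist_norm norm_minus_commute subset_iff)
    also have "\<dots> \<le> 2 * \<epsilon> * K"
      using \<epsilon> by (simp add: K_def)
    also have "\<dots> < r"
      using r K by (simp add: \<epsilon>_def)
    finally show ?thesis .
  qed
  then show "\<exists>s>0. \<forall>t. t \<noteq> 0 \<and> norm (t - 0) < s \<longrightarrow>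
      norm ((1/t\<^sup>2) *\<^sub>R (f (p + t *\<^sub>R v + t *\<^sub>R w) - f (p + t *\<^sub>R v) - f (p + t *\<^sub>R w) + f p) - A w) < r"
    using d1 d2 K by (intro exI[of _ "d / K"]) (auto simp: d_def)
qed

lemma has_derivative_second_symmetric:
  fixes f :: "'a::real_normed_vector \<Rightarrow> 'b::real_inner"
  assumes U: "open U" "p \<in> U"
    and f_deriv: "\<And>q. q \<in> U \<Longrightarrow> (f has_derivative Df q) (at q)"
    and "((\<lambda>q. Df q v) has_derivative Av) (at p)" and "((\<lambda>q. Df q w) has_derivative Aw) (at p)"
  shows "Av w = Aw v"
proof -
  have "(\<lambda>t. (1/t\<^sup>2) *\<^sub>R (f (p + t *\<^sub>R w + t *\<^sub>R v) - f (p + t *\<^sub>R w) - f (p + t *\<^sub>R v) + f p))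
      = (\<lambda>t. (1/t\<^sup>2) *\<^sub>R (f (p + t *\<^sub>R v + t *\<^sub>R w) - f (p + t *\<^sub>R v) - f (p + t *\<^sub>R w) + f p))"
    by (simp add: algebra_simps)
  then show ?thesis
    using second_difference_tendsto[OF U f_deriv assms(4), of w]
      second_difference_tendsto[OF U f_deriv assms(5), of v]
    by (auto intro: tendsto_unique[OF trivial_limit_at])
qed

lemma smooth_on_ddir_has_derivative:
  assumes "smooth_on U f" and "p \<in> U"
  shows "(ddir vs f has_derivative (\<lambda>u. ddir (u # vs) f p)) (at p)"
  using assms by (simp add: smooth_on_def frechet_derivative_works)

lemma smooth_on_ddir_linear:
  assumes "smooth_on U f" and "p \<in> U"
  shows "linear (\<lambda>u. ddir (u # vs) f p)"
  using smooth_on_ddir_has_derivative[OF assms] by (rule has_derivative_linear)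

lemma smooth_on_ddir_symmetric:
  fixes f :: "'a::real_normed_vector \<Rightarrow> 'b::real_inner"
  assumes "open U" and "smooth_on U f" and "p \<in> U"
  shows "ddir [u, v] f p = ddir [v, u] f p"
proof -
  have f_deriv: "(f has_derivative (\<lambda>w. ddir [w] f q)) (at q)" if "q \<in> U" for q
    using smooth_on_ddir_has_derivative[OF assms(2) that, of "[]"] by simp
  have "((\<lambda>q. ddir [w] f q) has_derivative (\<lambda>u. ddir [u, w] f p)) (at p)" for w
    using smooth_on_ddir_has_derivative[OF assms(2,3), of "[w]"] by simp
  from has_derivative_second_symmetric[OF assms(1,3) f_deriv this this]
  show ?thesis .
qed

lemma smooth_on_ddir_continuous_on:
  fixes f :: "'a::euclidean_space \<Rightarrow> 'b::real_normed_vector"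
  assumes f: "smooth_on U f"
  shows "continuous_on (UNIV \<times> U) (\<lambda>(u, q). ddir (u # vs) f q)"
proof -
  have expand: "ddir (u # vs) f q = (\<Sum>b\<in>Basis. (u \<bullet> b) *\<^sub>R ddir (b # vs) f q)" if "q \<in> U" for u q
  proof -
    define L where "L = (\<lambda>u. ddir (u # vs) f q)"
    have L: "linear L"
      unfolding L_def by (rule smooth_on_ddir_linear[OF f that])
    have "L u = L (\<Sum>b\<in>Basis. (u \<bullet> b) *\<^sub>R b)"
      by (simp only: euclidean_representation)
    also have "\<dots> = (\<Sum>b\<in>Basis. (u \<bullet> b) *\<^sub>R L b)"
      by (simp add: linear_sum[OF L] linear_scale[OF L])
    finally show ?thesis
      by (simp only: L_def)
  qed
  have cont: "continuous_on (UNIV \<times> U) (\<lambda>x. \<Sum>b\<in>Basis. (fst x \<bullet> b) *\<^sub>R ddir (b # vs) f (snd x))"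
  proof -
    have "continuous_on U (ddir (b # vs) f)" for b
      using f unfolding smooth_on_def
      by (blast intro: continuous_at_imp_continuous_on differentiable_imp_continuous_within)
    then have "continuous_on (UNIV \<times> U) (\<lambda>x. ddir (b # vs) f (snd x))" for b
      by (rule continuous_on_compose2[OF _ continuous_on_snd]) auto
    then show ?thesis
      by (intro continuous_on_sum continuous_on_scaleR continuous_on_inner continuous_on_fst
          continuous_on_id continuous_on_const)
  qed
  show ?thesis
    by (rule continuous_on_cong[THEN iffD1, OF refl _ cont])
      (auto simp: expand simp del: ddir.simps)
qed

section \<open>Wirtinger derivatives in two variables\<close>

definition d_y :: "(complex \<times> complex \<Rightarrow> complex) \<Rightarrow> complex \<times> complex \<Rightarrow> complex" where
  "d_y f p = (frechet_derivative f (at p) (0, 1) - \<i> * frechet_derivative f (at p) (0, \<i>)) / 2"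

lemma linear_complex2_eq:
  fixes T :: "complex \<times> complex \<Rightarrow> complex"
  assumes "linear T"
  shows "T (a, b) = of_real (Re a) * T (1, 0) + of_real (Im a) * T (\<i>, 0)
    + of_real (Re b) * T (0, 1) + of_real (Im b) * T (0, \<i>)"
proof -
  have "(a, b) = Re a *\<^sub>R (1, 0) + Im a *\<^sub>R (\<i>, 0) + Re b *\<^sub>R (0, 1) + Im b *\<^sub>R (0, \<i>)"
    by (simp add: complex_eq_iff)
  then have "T (a, b) = T (Re a *\<^sub>R (1, 0) + Im a *\<^sub>R (\<i>, 0) + Re b *\<^sub>R (0, 1) + Im b *\<^sub>R (0, \<i>))"
    by simp
  also have "\<dots> = Re a *\<^sub>R T (1, 0) + Im a *\<^sub>R T (\<i>, 0) + Re b *\<^sub>R T (0, 1) + Im b *\<^sub>R T (0, \<i>)"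
    by (simp only: linear_add[OF assms] linear_scale[OF assms])
  finally show ?thesis
    by (simp add: scaleR_conv_of_real)
qed

lemma dbar_y_add:
  assumes "F differentiable (at p)" and "G differentiable (at p)"
  shows "dbar_y (\<lambda>q. F q + G q) p = dbar_y F p + dbar_y G p"
  using assms
  by (simp add: dbar_y_def frechet_derivative_at[OF has_derivative_add, symmetric]
      frechet_derivative_works algebra_simps add_divide_distrib)

lemma dbar_y_mult:
  assumes "F differentiable (at p)" and "G differentiable (at p)"
  shows "dbar_y (\<lambda>q. F q * G q) p = dbar_y F p * G p + F p * dbar_y G p"
  using assms
  by (simp add: dbar_y_def frechet_derivative_at[OF has_derivative_mult, symmetric]
      frechet_derivative_works algebra_simps add_divide_distrib)

lemma dbar_y_cnj:
  assumes "F differentiable (at p)"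
  shows "dbar_y (\<lambda>q. cnj (F q)) p = cnj (d_y F p)"
  using assms
  by (simp add: dbar_y_def d_y_def frechet_derivative_works
      frechet_derivative_at[OF bounded_linear.has_derivative[OF bounded_linear_cnj], symmetric])

lemma dbar_y_eq_0_if_vanishing:
  assumes "open U" and "p \<in> U" and "\<And>q. q \<in> U \<Longrightarrow> F q = 0"
  shows "dbar_y F p = 0"
proof -
  have "(F has_derivative (\<lambda>_. 0)) (at p)"
    by (rule has_derivative_transform_within_open[OF has_derivative_const assms(1,2)])
      (simp add: assms(3))
  then show ?thesis
    by (simp add: dbar_y_def frechet_derivative_at[symmetric])
qed

lemma has_derivative_graph:
  assumes "(F has_derivative DF) (at (x, \<phi> x))" and "(\<phi> has_field_derivative m) (at x)"
  shows "((\<lambda>x. F (x, \<phi> x)) has_derivative (\<lambda>v. DF (v, m * v))) (at x)"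
proof -
  have "((\<lambda>x. (x, \<phi> x)) has_derivative (\<lambda>v. (v, m * v))) (at x)"
    using has_derivative_Pair[OF has_derivative_ident assms(2)[unfolded has_field_derivative_def]]
    by simp
  from has_derivative_compose[OF this assms(1)] show ?thesis
    by (simp add: o_def)
qed

lemma dbar_graph:
  assumes "F differentiable (at (x, \<phi> x))" and "(\<phi> has_field_derivative m) (at x)"
  shows "dbar (\<lambda>x. F (x, \<phi> x)) x = dbar_x F (x, \<phi> x) + cnj m * dbar_y F (x, \<phi> x)"
proof -
  define T where "T = frechet_derivative F (at (x, \<phi> x))"
  have T: "(F has_derivative T) (at (x, \<phi> x))"
    using assms(1) by (simp add: T_def frechet_derivative_works)
  have lin: "linear T"
    using T by (rule has_derivative_linear)
  have dbar_T: "dbar (\<lambda>x. F (x, \<phi> x)) x = (T (1, m) + \<i> * T (\<i>, m * \<i>)) / 2"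
    by (simp add: dbar_def frechet_derivative_at[OF has_derivative_graph[OF T assms(2)], symmetric])
  have cnj_m: "cnj m = of_real (Re m) - \<i> * of_real (Im m)"
    by (simp add: complex_eq_iff)
  show ?thesis
    unfolding dbar_T cnj_m dbar_x_def dbar_y_def T_def[symmetric]
      linear_complex2_eq[OF lin, of 1 m] linear_complex2_eq[OF lin, of \<i> "m * \<i>"]
    by (simp add: field_simps)
qed

lemma smooth_on_differentiable:
  assumes "smooth_on U f" and "p \<in> U"
  shows "f differentiable (at p)"
  using assms ddir.simps(1) unfolding smooth_on_def by metis

lemma smooth_on_wirtinger_has_derivative:
  fixes f :: "'a::real_normed_vector \<Rightarrow> complex"
  assumes "smooth_on U f" and "p \<in> U"
  shows "((\<lambda>q. (ddir [a] f q + c * ddir [b] f q) / 2) has_derivative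
    (\<lambda>u. (ddir [u, a] f p + c * ddir [u, b] f p) / 2)) (at p)"
  by (rule derivative_eq_intros smooth_on_ddir_has_derivative[OF assms] refl | simp)+

lemma dbar_x_eq_ddir: "dbar_x f = (\<lambda>q. (ddir [(1, 0)] f q + \<i> * ddir [(\<i>, 0)] f q) / 2)"
  by (simp add: fun_eq_iff dbar_x_def)

lemma dbar_y_eq_ddir: "dbar_y f = (\<lambda>q. (ddir [(0, 1)] f q + \<i> * ddir [(0, \<i>)] f q) / 2)"
  by (simp add: fun_eq_iff dbar_y_def)

lemma d_y_eq_ddir: "d_y f = (\<lambda>q. (ddir [(0, 1)] f q + - \<i> * ddir [(0, \<i>)] f q) / 2)"
  by (simp add: fun_eq_iff d_y_def)

lemma smooth_on_dbar_y_dbar_x_commute: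
  assumes "open U" and "smooth_on U f" and "p \<in> U"
  shows "dbar_y (dbar_x f) p = dbar_x (dbar_y f) p"
proof -
  have "ddir [(0, 1), (1, 0)] f p = ddir [(1, 0), (0, 1)] f p"
    and "ddir [(0, \<i>), (1, 0)] f p = ddir [(1, 0), (0, \<i>)] f p"
    and "ddir [(0, 1), (\<i>, 0)] f p = ddir [(\<i>, 0), (0, 1)] f p"
    and "ddir [(0, \<i>), (\<i>, 0)] f p = ddir [(\<i>, 0), (0, \<i>)] f p"
    by (rule smooth_on_ddir_symmetric[OF assms])+
  then show ?thesis
    unfolding dbar_y_def[of "dbar_x f"] dbar_x_def[of "dbar_y f"]
    unfolding dbar_x_eq_ddir dbar_y_eq_ddir
      frechet_derivative_at[OF smooth_on_wirtinger_has_derivative[OF assms(2,3)], symmetric]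
    by (simp add: field_simps)
qed

lemma dbar_dbar_y_along_leaf:
  assumes U: "open U" and lam: "smooth_on U lam"
    and semihol: "\<forall>p\<in>U. dbar_x lam p + cnj (lam p) * dbar_y lam p = 0"
    and leaf: "(\<phi> has_field_derivative lam (x, \<phi> x)) (at x)" and q: "(x, \<phi> x) \<in> U"
  shows "dbar (\<lambda>x. dbar_y lam (x, \<phi> x)) x = - cnj (d_y lam (x, \<phi> x)) * dbar_y lam (x, \<phi> x)"
proof -
  define q where "q = (x, \<phi> x)"
  have "q \<in> U"
    using q by (simp add: q_def)
  have lam_diff: "lam differentiable (at q)"
    using smooth_on_differentiable[OF lam \<open>q \<in> U\<close>] .
  have dbar_x_diff: "dbar_x lam differentiable (at q)"
    and dbar_y_diff: "dbar_y lam differentiable (at q)"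
    unfolding dbar_x_eq_ddir dbar_y_eq_ddir
    by (rule differentiableI, rule smooth_on_wirtinger_has_derivative[OF lam \<open>q \<in> U\<close>])+
  have "0 = dbar_y (\<lambda>p. dbar_x lam p + cnj (lam p) * dbar_y lam p) q"
    using dbar_y_eq_0_if_vanishing[OF U \<open>q \<in> U\<close>] semihol by simp
  also have "\<dots> = dbar_y (dbar_x lam) q + cnj (d_y lam q) * dbar_y lam q
      + cnj (lam q) * dbar_y (dbar_y lam) q"
    using lam_diff dbar_x_diff dbar_y_diff
    by (simp add: dbar_y_add dbar_y_mult dbar_y_cnj differentiable_mult
        differentiable_compose[OF bounded_linear_cnj[THEN bounded_linear_imp_differentiable]])
  also have "dbar_y (dbar_x lam) q = dbar_x (dbar_y lam) q"
    by (rule smooth_on_dbar_y_dbar_x_commute[OF U lam \<open>q \<in> U\<close>])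
  finally have
    "dbar_x (dbar_y lam) q + cnj (lam q) * dbar_y (dbar_y lam) q = - cnj (d_y lam q) * dbar_y lam q"
    by algebra
  with dbar_graph[OF dbar_y_diff[unfolded q_def] leaf] show ?thesis
    by (simp add: q_def)
qed

lemma continuous_on_frechet_derivative_graph:
  assumes \<phi>: "\<And>x. x \<in> D \<Longrightarrow> (\<phi> has_field_derivative \<phi>' x) (at x)" and \<phi>'_cont: "continuous_on D \<phi>'"
    and graph: "\<And>x. x \<in> D \<Longrightarrow> (x, \<phi> x) \<in> U"
    and F: "\<And>q. q \<in> U \<Longrightarrow> (F has_derivative DF q) (at q)"
    and DF_cont: "continuous_on (UNIV \<times> U) (\<lambda>(u, q). DF q u)"
  shows "continuous_on D (\<lambda>x. frechet_derivative (\<lambda>x. F (x, \<phi> x)) (at x) v)"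
proof -
  have "continuous_on D \<phi>"
    using \<phi> by (blast intro: continuous_at_imp_continuous_on DERIV_isCont)
  then have cont: "continuous_on D (\<lambda>x. (\<lambda>(u, q). DF q u) ((v, \<phi>' x * v), (x, \<phi> x)))"
    using graph by (intro continuous_on_compose2[OF DF_cont] continuous_intros \<phi>'_cont) auto
  have eq: "frechet_derivative (\<lambda>x. F (x, \<phi> x)) (at x) v = DF (x, \<phi> x) (v, \<phi>' x * v)"
    if "x \<in> D" for x
    by (simp add:
        frechet_derivative_at[OF has_derivative_graph[OF F[OF graph[OF that]] \<phi>[OF that]], symmetric])
  show ?thesis
    by (rule continuous_on_cong[THEN iffD1, OF refl _ cont]) (simp add: eq)
qed

lemma leaf_dbar_mult_equation:
  assumes U_open: "open U" and lam_smooth: "smooth_on U lam"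
    and semihol: "\<forall>p\<in>U. dbar_x lam p + cnj (lam p) * dbar_y lam p = 0"
    and D_open: "open D" and \<phi>_hol: "\<phi> holomorphic_on D"
    and graph_in_U: "\<forall>x\<in>D. (x, \<phi> x) \<in> U"
    and leaf: "\<forall>x\<in>D. deriv \<phi> x = lam (x, \<phi> x)"
  shows "dbar_mult_equation D (\<lambda>x. dbar_y lam (x, \<phi> x)) (\<lambda>x. - cnj (d_y lam (x, \<phi> x)))"
proof -
  define Db where "Db q u = (ddir [u, (0, 1)] lam q + \<i> * ddir [u, (0, \<i>)] lam q) / 2" for q u
  define Dc where "Dc q u = - cnj ((ddir [u, (0, 1)] lam q + - \<i> * ddir [u, (0, \<i>)] lam q) / 2)"
    for q u
  have \<phi>': "(\<phi> has_field_derivative deriv \<phi> x) (at x)" if "x \<in> D" for x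
    by (rule holomorphic_derivI[OF \<phi>_hol D_open that])
  have b_deriv: "(dbar_y lam has_derivative Db q) (at q)" if "q \<in> U" for q
    unfolding dbar_y_eq_ddir Db_def[abs_def]
    by (rule smooth_on_wirtinger_has_derivative[OF lam_smooth that])
  have c_deriv: "((\<lambda>q. - cnj (d_y lam q)) has_derivative Dc q) (at q)" if "q \<in> U" for q
    unfolding d_y_eq_ddir Dc_def[abs_def]
    by (intro has_derivative_minus bounded_linear.has_derivative[OF bounded_linear_cnj]
        smooth_on_wirtinger_has_derivative[OF lam_smooth that])
  have Dc_cont: "continuous_on (UNIV \<times> U) (\<lambda>(u, q). Dc q u)"
    using smooth_on_ddir_continuous_on[OF lam_smooth, of "[(0, 1)]"]
      smooth_on_ddir_continuous_on[OF lam_smooth, of "[(0, \<i>)]"]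
    unfolding Dc_def split_beta by (intro continuous_intros) auto
  show ?thesis
  proof
    fix x assume x: "x \<in> D"
    show "(\<lambda>x. dbar_y lam (x, \<phi> x)) differentiable (at x)"
      using has_derivative_graph[OF b_deriv \<phi>'] graph_in_U x by (blast intro: differentiableI)
    show "(\<lambda>x. - cnj (d_y lam (x, \<phi> x))) differentiable (at x)"
      using has_derivative_graph[OF c_deriv \<phi>'] graph_in_U x by (blast intro: differentiableI)
    show "dbar (\<lambda>x. dbar_y lam (x, \<phi> x)) x = - cnj (d_y lam (x, \<phi> x)) * dbar_y lam (x, \<phi> x)"
      using dbar_dbar_y_along_leaf[OF U_open lam_smooth semihol] \<phi>'[OF x] leaf graph_in_U x by simp
  next
    show "continuous_on D (\<lambda>x. frechet_derivative (\<lambda>x. - cnj (d_y lam (x, \<phi> x))) (at x) v)" for v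
      using graph_in_U holomorphic_on_imp_continuous_on[OF holomorphic_deriv[OF \<phi>_hol D_open]]
      by (intro continuous_on_frechet_derivative_graph[OF \<phi>' _ _ c_deriv Dc_cont]) auto
  qed (rule D_open)
qed

theorem mainTheorem2:
  fixes U :: "(complex \<times> complex) set"
    and lam :: "complex \<times> complex \<Rightarrow> complex"
    and D :: "complex set"
    and \<phi> :: "complex \<Rightarrow> complex"
  assumes U_open: "open U"
    and lam_smooth: "smooth_on U lam"
    and semihol: "\<forall>p\<in>U. dbar_x lam p + cnj (lam p) * dbar_y lam p = 0"
    and D_open: "open D" and D_conn: "connected D"
    and \<phi>_hol: "\<phi> holomorphic_on D"
    and graph_in_U: "\<forall>x\<in>D. (x, \<phi> x) \<in> U"
    and leaf: "\<forall>x\<in>D. deriv \<phi> x = lam (x, \<phi> x)"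
  shows "({x\<in>D. dbar_y lam (x, \<phi> x) = 0} sparse_in D
          \<or> {x\<in>D. dbar_y lam (x, \<phi> x) = 0} = D)
       \<and> (\<forall>x0. x0 isolated_in {x\<in>D. dbar_y lam (x, \<phi> x) = 0}
              \<longrightarrow> dbar (\<lambda>x. dbar_y lam (x, \<phi> x)) x0 = 0)"
proof -
  interpret dbar_mult_equation D "\<lambda>x. dbar_y lam (x, \<phi> x)" "\<lambda>x. - cnj (d_y lam (x, \<phi> x))"
    by (rule leaf_dbar_mult_equation[OF U_open lam_smooth semihol D_open \<phi>_hol graph_in_U leaf])
  have "\<forall>x0. x0 isolated_in {x\<in>D. dbar_y lam (x, \<phi> x) = 0} \<longrightarrow> dbar (\<lambda>x. dbar_y lam (x, \<phi> x)) x0 = 0"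
    using dbar_eq by (auto simp: isolated_in_def)
  with zeros_sparse_or_all[OF D_conn] show ?thesis
    by blast
qed

end
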